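(* (1) Let $T_{ab|cd}$ be the binary 4-taxon tree with split $ab|cd$, and consider the $2$-state GM+I model on it. Then the cubic polynomials $$f_1=\det\begin{pmatrix} p_{1112} & p_{1121} & p_{1122}\\ p_{1212} & p_{1221} & p_{1222}\\ p_{2112} & p_{2121} & p_{2122}\end{pmatrix},\qquad f_2=\det\begin{pmatrix} p_{1211} & p_{1212} & p_{1221}\\ p_{2111} & p_{2112} & p_{2121}\\ p_{2211} & p_{2212} & p_{2221}\end{pmatrix}$$ are phylogenetic invariants. (These are the two $3\times 3$ minors of the flattening $F_{ab|cd}$ that involve neither $p_{1111}$ nor $p_{2222}$.) (2) More generally, let $n\ge 4$, $\kappa\ge 2$, and consider the $\kappa$-state GM+I model on an $n$-taxon tree $T$. Then for each edge $e$ of $T$, every $(\kappa+1)\times(\kappa+1)$ minor of the flattening $F_e$ of $P$ that involves none of the entries $p_{ii\dots i}$, $i\in\{1,\dots,\kappa\}$, is a phylogenetic invariant.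
   Context: An $n$-taxon tree is a tree whose $n$ leaves are labeled by taxa $a_1,\dots,a_n$ and whose internal vertices all have valence at least 3; it is binary if all internal vertices have valence 3. The $\kappa$-state GM+I (general Markov plus invariable sites) model on $T$ with edge set $E$ has parameters: $\delta\in[0,1]$; a probability vector $\pi_I\in[0,1]^\kappa$; a probability vector $\pi_{GM}$ (root distribution) at a chosen root vertex $r$; and for each edge $e=(v\to w)$ (edges directed away from $r$) a $\kappa\times\kappa$ Markov matrix $M_e$ (nonnegative entries, rows summing to 1). The joint distribution at the leaves is the $n$-dimensional $\kappa\times\dots\times\kappa$ array $P=\phi_T(\mathbf s)$ with entries $$p_{i_1\dots i_n}=\delta\,\epsilon(i_1,\dots,i_n)\pi_I(i_1)+(1-\delta)\sum_{(j_v)}\pi_{GM}(j_r)\prod_{e=(u\to w)\in E}M_e(j_u,j_w),$$ where $\epsilon(i_1,\dots,i_n)=1$ if all $i_k$ are equal and $0$ otherwise, and the sum runs over all assignments of states $j_v\in\{1,\dots,\kappa\}$ to all vertices $v$ of $T$ with $j_v=i_k$ when $v$ is the leaf labeled $a_k$. The entries are polynomials in the parameters; extend $\phi_T$ to complex parameter values by the same formulas. A phylogenetic invariant is a polynomial in the $\kappa^n$ indeterminates $p_{i_1\dots i_n}$ vanishing on $\phi_T(\mathbf s)$ for all stochastic parameters $\mathbf s$ (equivalently, on the image of the complexified map). For an edge $e$ of $T$ inducing the split of the taxa into sets $A|B$, the flattening $F_e$ is the $\kappa^{|A|}\times\kappa^{|B|}$ matrix whose rows are indexed by state assignments to taxa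 in $A$, columns by state assignments to taxa in $B$, with entry the corresponding $p_{i_1\dots i_n}$. For $T_{ab|cd}$ with indices in taxon order $a,b,c,d$, $F_{ab|cd}$ is the $4\times4$ matrix with rows indexed by $ab$-states $11,12,21,22$ and columns by $cd$-states $11,12,21,22$. *)

theory Defs
  imports "Jordan_Normal_Form.Determinant" "HOL-Library.FuncSet"
begin

text \<open>Trees are given by a finite vertex set V (type 'v), a set E of undirected edges
(two-element subsets of V), and a leaf labelling lab : {0..<n} -> leaves (taxon k is a_(k+1)).
Character states are 0..<kappa (state s+1 of the paper is s here).\<close>

definition reach :: "'v set set \<Rightarrow> 'v \<Rightarrow> 'v \<Rightarrow> bool" where
  "reach E x y \<longleftrightarrow> (x, y) \<in> {(a, b). {a, b} \<in> E}\<^sup>*"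

definition deg :: "'v set set \<Rightarrow> 'v \<Rightarrow> nat" where
  "deg E v = card {e \<in> E. v \<in> e}"

definition is_tree :: "'v set \<Rightarrow> 'v set set \<Rightarrow> bool" where
  "is_tree V E \<longleftrightarrow> finite V \<and> V \<noteq> {}
     \<and> E \<subseteq> {{u, w} | u w. u \<in> V \<and> w \<in> V \<and> u \<noteq> w}
     \<and> (\<forall>u\<in>V. \<forall>w\<in>V. reach E u w)
     \<and> card E + 1 = card V"

definition taxon_tree :: "'v set \<Rightarrow> 'v set set \<Rightarrow> (nat \<Rightarrow> 'v) \<Rightarrow> nat \<Rightarrow> bool" where
  "taxon_tree V E lab n \<longleftrightarrow> is_tree V E
     \<and> bij_betw lab {..<n} {v \<in> V. deg E v = 1}
     \<and> (\<forall>v\<in>V. deg E v \<noteq> 1 \<longrightarrow> deg E v \<ge> 3)"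

definition binary_taxon_tree :: "'v set \<Rightarrow> 'v set set \<Rightarrow> (nat \<Rightarrow> 'v) \<Rightarrow> nat \<Rightarrow> bool" where
  "binary_taxon_tree V E lab n \<longleftrightarrow> taxon_tree V E lab n
     \<and> (\<forall>v\<in>V. deg E v \<noteq> 1 \<longrightarrow> deg E v = 3)"

text \<open>Orientation of edge e away from root r: parent endpoint lies on r's side of e.\<close>
definition par :: "'v set set \<Rightarrow> 'v \<Rightarrow> 'v set \<Rightarrow> 'v" where
  "par E r e = (THE u. u \<in> e \<and> reach (E - {e}) r u)"

definition chi :: "'v set set \<Rightarrow> 'v \<Rightarrow> 'v set \<Rightarrow> 'v" where
  "chi E r e = (THE w. w \<in> e \<and> \<not> reach (E - {e}) r w)"

definition side :: "'v set set \<Rightarrow> (nat \<Rightarrow> 'v) \<Rightarrow> nat \<Rightarrow> 'v set \<Rightarrow> 'v \<Rightarrow> nat set" where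
  "side E lab n e v = {k. k < n \<and> reach (E - {e}) v (lab k)}"

definition prob_vec :: "nat \<Rightarrow> (nat \<Rightarrow> real) \<Rightarrow> bool" where
  "prob_vec \<kappa> p \<longleftrightarrow> (\<forall>s<\<kappa>. p s \<ge> 0) \<and> (\<Sum>s<\<kappa>. p s) = 1"

definition markov :: "nat \<Rightarrow> (nat \<Rightarrow> nat \<Rightarrow> real) \<Rightarrow> bool" where
  "markov \<kappa> M \<longleftrightarrow> (\<forall>x<\<kappa>. prob_vec \<kappa> (M x))"

definition stoch_params ::
  "'v set set \<Rightarrow> nat \<Rightarrow> real \<Rightarrow> (nat \<Rightarrow> real) \<Rightarrow> (nat \<Rightarrow> real) \<Rightarrow> ('v set \<Rightarrow> nat \<Rightarrow> nat \<Rightarrow> real) \<Rightarrow> bool" where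
  "stoch_params E \<kappa> \<delta> \<pi>I \<pi>G M \<longleftrightarrow> 0 \<le> \<delta> \<and> \<delta> \<le> 1 \<and> prob_vec \<kappa> \<pi>I \<and> prob_vec \<kappa> \<pi>G
     \<and> (\<forall>e\<in>E. markov \<kappa> (M e))"

definition GMI_dist ::
  "'v set \<Rightarrow> 'v set set \<Rightarrow> (nat \<Rightarrow> 'v) \<Rightarrow> nat \<Rightarrow> nat \<Rightarrow> 'v \<Rightarrow> real \<Rightarrow> (nat \<Rightarrow> real)
    \<Rightarrow> (nat \<Rightarrow> real) \<Rightarrow> ('v set \<Rightarrow> nat \<Rightarrow> nat \<Rightarrow> real) \<Rightarrow> nat list \<Rightarrow> real" where
  "GMI_dist V E lab n \<kappa> r \<delta> \<pi>I \<pi>G M i =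
     \<delta> * (if (\<forall>k<n. i ! k = i ! 0) then \<pi>I (i ! 0) else 0)
     + (1 - \<delta>) * (\<Sum>j \<in> {j \<in> V \<rightarrow>\<^sub>E {..<\<kappa>}. \<forall>k<n. j (lab k) = i ! k}.
           \<pi>G (j r) * (\<Prod>e\<in>E. M e (j (par E r e)) (j (chi E r e))))"

definition phylo_invariant ::
  "'v set \<Rightarrow> 'v set set \<Rightarrow> (nat \<Rightarrow> 'v) \<Rightarrow> nat \<Rightarrow> nat \<Rightarrow> ((nat list \<Rightarrow> real) \<Rightarrow> real) \<Rightarrow> bool" where
  "phylo_invariant V E lab n \<kappa> f \<longleftrightarrow>
     (\<forall>r\<in>V. \<forall>\<delta> \<pi>I \<pi>G M. stoch_params E \<kappa> \<delta> \<pi>I \<pi>G M \<longrightarrow>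
        f (GMI_dist V E lab n \<kappa> r \<delta> \<pi>I \<pi>G M) = 0)"

definition flat_idx :: "nat \<Rightarrow> nat set \<Rightarrow> (nat \<Rightarrow> nat) \<Rightarrow> (nat \<Rightarrow> nat) \<Rightarrow> nat list" where
  "flat_idx n A a b = map (\<lambda>k. if k \<in> A then a k else b k) [0..<n]"

definition flat_minor :: "nat \<Rightarrow> nat set \<Rightarrow> (nat \<Rightarrow> nat) list \<Rightarrow> (nat \<Rightarrow> nat) list
    \<Rightarrow> (nat list \<Rightarrow> real) \<Rightarrow> real" where
  "flat_minor n A rs cs P =
     det (mat (length rs) (length cs) (\<lambda>(x, y). P (flat_idx n A (rs ! x) (cs ! y))))"

end

theory Submission
  imports Defs
begin

(* Deleting an edge e = {v, w} of a tree leaves two components, C containing v and its complement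
   D containing w, and every other edge lies inside C or inside D. Hence the general Markov weight
   of a hidden-state assignment is a product G(states on C) * H(state at v, states on D), so a
   flattening entry for the split of the leaves induced by e is a sum over the kappa states s at v
   of L(a, s) R(s, b). Off the constant patterns i...i the invariable-sites term vanishes, so every
   (kappa+1)-minor avoiding them is the determinant of a product through a kappa-dimensional space
   and is 0, for all (not only stochastic) parameter values. Part (1) is the case n = 4, kappa = 2. *)

lemma det_mat_sum_of_products_eq_0:
  fixes L :: "nat \<Rightarrow> nat \<Rightarrow> 'a :: comm_ring_1" and R :: "nat \<Rightarrow> nat \<Rightarrow> 'a"
  shows "det (mat (Suc k) (Suc k) (\<lambda>(x, y). \<Sum>s<k. L x s * R s y)) = 0"
proof -
  define A where "A = mat (Suc k) (Suc k) (\<lambda>(x, s). if s < k then L x s else 0)"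
  define B where "B = mat (Suc k) (Suc k) (\<lambda>(s, y). if s < k then R s y else 0)"
  have "mat (Suc k) (Suc k) (\<lambda>(x, y). \<Sum>s<k. L x s * R s y) = A * B"
  proof (rule eq_matI)
    fix x y assume "x < dim_row (A * B)" "y < dim_col (A * B)"
    then show "mat (Suc k) (Suc k) (\<lambda>(x, y). \<Sum>s<k. L x s * R s y) $$ (x, y) = (A * B) $$ (x, y)"
      by (simp add: A_def B_def scalar_prod_def atLeast0LessThan lessThan_Suc)
  qed (simp_all add: A_def B_def)
  moreover have "det A = 0"
  proof -
    have "(\<Prod>j<Suc k. A $$ (p j, j)) = 0" if "p permutes {0..<Suc k}" for p
    proof (rule prod_zero)
      have "p k < Suc k" using that by (auto dest: permutes_in_image)
      then show "\<exists>j\<in>{..<Suc k}. A $$ (p j, j) = 0" by (intro bexI[of _ k]) (simp_all add: A_def)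
    qed simp
    moreover have "det A = (\<Sum>p | p permutes {0..<Suc k}. signof p * (\<Prod>j<Suc k. A $$ (p j, j)))"
      by (rule det_col) (simp add: A_def)
    ultimately show ?thesis by simp
  qed
  moreover have "det (A * B) = det A * det B"
    by (rule det_mult[where n = "Suc k"]) (simp_all add: A_def B_def)
  ultimately show ?thesis by simp
qed

lemma reach_refl [simp]: "reach F x x"
  by (simp add: reach_def)

lemma reach_step: "reach F x y \<Longrightarrow> {y, z} \<in> F \<Longrightarrow> reach F x z"
  unfolding reach_def by (rule rtrancl_into_rtrancl) auto

lemma reach_trans: "reach F x y \<Longrightarrow> reach F y z \<Longrightarrow> reach F x z"
  unfolding reach_def by (rule rtrancl_trans)

lemma reach_sym: "reach F x y \<Longrightarrow> reach F y x"
proof -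
  have "sym ({(a, b). {a, b} \<in> F}\<^sup>*)"
    by (rule sym_rtrancl) (auto simp: sym_def insert_commute)
  then show "reach F x y \<Longrightarrow> reach F y x"
    unfolding reach_def by (rule symD)
qed

lemma reach_mono: "F \<subseteq> F' \<Longrightarrow> reach F x y \<Longrightarrow> reach F' x y"
  unfolding reach_def by (rule subsetD[OF rtrancl_mono]) auto

lemma reach_empty: "reach {} x y \<Longrightarrow> x = y"
  unfolding reach_def by (auto elim: rtranclE)

lemma reach_insert_edgeD:
  assumes "reach (insert {a, b} F) x y"
  shows "reach F x y \<or> ((reach F x a \<or> reach F x b) \<and> (reach F y a \<or> reach F y b))"
  using assms unfolding reach_def[of "insert {a, b} F"]
proof (induction rule: rtrancl_induct)
  case (step y z)
  show ?case
  proof (cases "{y, z} = {a, b}")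
    case True
    then have "y = a \<or> y = b" "z = a \<or> z = b" by (auto simp: doubleton_eq_iff)
    then show ?thesis using step.IH reach_refl[of F a] reach_refl[of F b] by blast
  next
    case False
    then have yz: "{y, z} \<in> F" using step.hyps(2) by simp
    then have "reach F z y" using reach_step[of F z z y] by (simp add: insert_commute)
    then show ?thesis using step.IH reach_step[OF _ yz] reach_trans[of F z y] by blast
  qed
qed simp

definition component :: "'v set set \<Rightarrow> 'v set \<Rightarrow> 'v \<Rightarrow> 'v set" where
  "component F V x = {y \<in> V. reach F x y}"

lemma component_eq: "reach F x y \<Longrightarrow> component F V x = component F V y"
  unfolding component_def by (meson reach_sym reach_trans)

lemma edge_within_component:
  assumes "{a, b} \<in> F" "a \<in> V" "b \<in> V"
  shows "a \<in> component F V x \<longleftrightarrow> b \<in> component F V x"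
proof -
  have "reach F x a \<longleftrightarrow> reach F x b"
    using reach_step[of F x a b] reach_step[of F x b a] assms(1) by (auto simp: insert_commute)
  then show ?thesis using assms(2,3) by (simp add: component_def)
qed

lemma card_components_insert:
  assumes "finite V" "a \<in> V"
  shows "card (component F V ` V) \<le> card (component (insert {a, b} F) V ` V) + 1"
proof -
  let ?F' = "insert {a, b} F"
  define \<psi> where "\<psi> X = {y \<in> V. \<exists>x\<in>X. reach ?F' x y}" for X
  have \<psi>: "\<psi> (component F V x) = component ?F' V x" if "x \<in> V" for x
  proof
    show "\<psi> (component F V x) \<subseteq> component ?F' V x"
    proof
      fix y assume "y \<in> \<psi> (component F V x)"
      then obtain z where "y \<in> V" "reach F x z" "reach ?F' z y"
        by (auto simp: \<psi>_def component_def)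
      then show "y \<in> component ?F' V x"
        using reach_mono[of F ?F' x z] reach_trans[of ?F' x z y] by (auto simp: component_def)
    qed
    show "component ?F' V x \<subseteq> \<psi> (component F V x)"
      using that by (auto simp: \<psi>_def component_def)
  qed
  have "inj_on \<psi> (component F V ` V - {component F V a})"
  proof (rule inj_onI)
    fix X Y assume X: "X \<in> component F V ` V - {component F V a}"
      and Y: "Y \<in> component F V ` V - {component F V a}" and eq: "\<psi> X = \<psi> Y"
    obtain x y where xy: "x \<in> V" "y \<in> V" "X = component F V x" "Y = component F V y"
      using X Y by auto
    have "\<not> reach F x a" "\<not> reach F y a"
      using X Y xy component_eq[of F _ a V] by blast+
    moreover have "y \<in> component ?F' V x"
      using eq xy \<psi>[of x] \<psi>[of y] by (simp add: component_def)
    then have "reach ?F' x y" by (simp add: component_def)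
    ultimately have "reach F x y"
      using reach_insert_edgeD[of a b F x y] reach_sym[of F y b] reach_trans[of F x b y] by blast
    then show "X = Y" using xy component_eq[of F x y V] by simp
  qed
  then have "card (component F V ` V - {component F V a})
      = card (\<psi> ` (component F V ` V - {component F V a}))"
    by (simp add: card_image)
  also have "\<dots> \<le> card (component ?F' V ` V)"
    using assms \<psi> by (intro card_mono) auto
  finally show ?thesis using assms by (simp add: card_Diff_singleton)
qed

lemma card_le_card_edges_plus_components:
  assumes "finite F" "finite V" "F \<subseteq> {{a, b} | a b. a \<in> V \<and> b \<in> V}"
  shows "card V \<le> card F + card (component F V ` V)"
  using assms
proof (induction F rule: finite_induct)
  case empty
  have "component {} V ` V = (\<lambda>x. {x}) ` V"
    by (rule image_cong) (auto simp: component_def dest: reach_empty)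
  then show ?case by (simp add: card_image)
next
  case (insert f F)
  then obtain a b where "f = {a, b}" "a \<in> V" by blast
  then have "card V \<le> card F + card (component F V ` V)" using insert by simp
  then show ?case using insert card_components_insert[of V a F b] \<open>f = {a, b}\<close> \<open>a \<in> V\<close>
    by simp
qed

lemma connected_card_le:
  assumes "finite F" "finite V" "V \<noteq> {}" "F \<subseteq> {{a, b} | a b. a \<in> V \<and> b \<in> V}"
    and "\<forall>u\<in>V. \<forall>w\<in>V. reach F u w"
  shows "card V \<le> card F + 1"
proof -
  have "component F V x = V" if "x \<in> V" for x
    using assms(5) that by (auto simp: component_def)
  then have "component F V ` V = {V}" using assms(3) by blast
  then show ?thesis using card_le_card_edges_plus_components[OF assms(1,2,4)] by simp
qed

lemma tree_finite_edges:
  assumes "is_tree V E"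
  shows "finite E"
proof (rule finite_subset)
  show "E \<subseteq> Pow V" using assms unfolding is_tree_def by blast
  show "finite (Pow V)" using assms unfolding is_tree_def by simp
qed

lemma tree_connected: "is_tree V E \<Longrightarrow> u \<in> V \<Longrightarrow> w \<in> V \<Longrightarrow> reach E u w"
  unfolding is_tree_def by blast

lemma tree_finite_vertices: "is_tree V E \<Longrightarrow> finite V"
  unfolding is_tree_def by (elim conjE)

lemma tree_nonempty: "is_tree V E \<Longrightarrow> V \<noteq> {}"
  unfolding is_tree_def by (elim conjE)

lemma tree_card_edges: "is_tree V E \<Longrightarrow> card E + 1 = card V"
  unfolding is_tree_def by blast

lemma tree_edgeE:
  assumes "is_tree V E" "f \<in> E"
  obtains a b where "f = {a, b}" "a \<in> V" "b \<in> V" "a \<noteq> b"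
  using assms unfolding is_tree_def by blast

lemma tree_edge_vertices:
  assumes "is_tree V E" "{a, b} \<in> E"
  shows "a \<in> V" "b \<in> V"
proof -
  obtain a' b' where "{a, b} = {a', b'}" "a' \<in> V" "b' \<in> V" by (rule tree_edgeE[OF assms])
  then show "a \<in> V" "b \<in> V" by (metis doubleton_eq_iff)+
qed

lemma tree_delete_edge_not_reach:
  assumes T: "is_tree V E" and ab: "{a, b} \<in> E"
  shows "\<not> reach (E - {{a, b}}) a b"
proof
  let ?F = "E - {{a, b}}"
  assume rab: "reach ?F a b"
  have aV: "a \<in> V" by (rule tree_edge_vertices(1)[OF T ab])
  have ra: "reach ?F a x" if "x \<in> V" for x
  proof -
    have "reach E a x" using tree_connected[OF T aV that] .
    then have "reach (insert {a, b} ?F) a x" by (simp add: insert_absorb[OF ab])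
    then show ?thesis
      using reach_insert_edgeD[of a b ?F a x] rab reach_sym[of ?F x a] reach_sym[of ?F x b]
        reach_trans[of ?F a b x] by blast
  qed
  have "card V \<le> card ?F + 1"
  proof (rule connected_card_le)
    show "finite ?F" using tree_finite_edges[OF T] by simp
    show "?F \<subseteq> {{a, b} | a b. a \<in> V \<and> b \<in> V}"
      using T unfolding is_tree_def by blast
    show "\<forall>u\<in>V. \<forall>w\<in>V. reach ?F u w"
      by (metis ra reach_sym reach_trans)
    show "finite V" "V \<noteq> {}" using tree_finite_vertices[OF T] tree_nonempty[OF T] .
  qed
  moreover have "card ?F + 1 = card E"
    using tree_finite_edges[OF T] ab card_Diff1_less[of E "{a, b}"] by (simp add: card_Diff_singleton)
  ultimately show False using tree_card_edges[OF T] by simp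
qed

lemma tree_edge_par_chi:
  assumes T: "is_tree V E" and f: "f \<in> E" and r: "r \<in> V"
  shows "f = {par E r f, chi E r f}" "par E r f \<noteq> chi E r f"
proof -
  let ?F = "E - {f}"
  obtain a b where ab: "f = {a, b}" "a \<in> V" "b \<in> V" by (rule tree_edgeE[OF T f])
  have "reach E r a" using tree_connected[OF T r ab(2)] .
  then have "reach (insert {a, b} ?F) r a" using f ab(1) by (simp add: insert_absorb)
  then have "reach ?F r a \<or> reach ?F r b" using reach_insert_edgeD[of a b ?F r a] by blast
  moreover have "\<not> (reach ?F r a \<and> reach ?F r b)"
    using tree_delete_edge_not_reach[OF T] f ab(1) reach_trans[OF reach_sym[of ?F r a], of b]
    by auto
  ultimately obtain p c where pc: "f = {p, c}" "reach ?F r p" "\<not> reach ?F r c"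
    using ab(1) by (metis insert_commute)
  have "par E r f = p" unfolding par_def by (rule the_equality) (use pc in auto)
  moreover have "chi E r f = c" unfolding chi_def by (rule the_equality) (use pc in auto)
  ultimately show "f = {par E r f, chi E r f}" "par E r f \<noteq> chi E r f" using pc by auto
qed

lemma sum_PiE_Un_restrict:
  fixes f :: "('a \<Rightarrow> 'b) \<Rightarrow> ('a \<Rightarrow> 'b) \<Rightarrow> 'c :: comm_monoid_add"
  assumes "C \<inter> D = {}"
  shows "(\<Sum>j\<in>{j \<in> C \<union> D \<rightarrow>\<^sub>E S. P (restrict j C) \<and> Q (restrict j D)}. f (restrict j C) (restrict j D))
       = (\<Sum>p\<in>{p \<in> C \<rightarrow>\<^sub>E S. P p}. \<Sum>q\<in>{q \<in> D \<rightarrow>\<^sub>E S. Q q}. f p q)"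
proof -
  define glue :: "('a \<Rightarrow> 'b) \<times> ('a \<Rightarrow> 'b) \<Rightarrow> 'a \<Rightarrow> 'b"
    where "glue = (\<lambda>(p, q) z. if z \<in> C then p z else q z)"
  have "(\<Sum>j\<in>{j \<in> C \<union> D \<rightarrow>\<^sub>E S. P (restrict j C) \<and> Q (restrict j D)}. f (restrict j C) (restrict j D))
      = (\<Sum>(p, q)\<in>{p \<in> C \<rightarrow>\<^sub>E S. P p} \<times> {q \<in> D \<rightarrow>\<^sub>E S. Q q}. f p q)"
  proof (rule sum.reindex_bij_witness[where j = "\<lambda>j. (restrict j C, restrict j D)" and i = glue])
    fix j assume "j \<in> {j \<in> C \<union> D \<rightarrow>\<^sub>E S. P (restrict j C) \<and> Q (restrict j D)}"
    then have j: "j \<in> C \<union> D \<rightarrow>\<^sub>E S" by simp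
    show "glue (restrict j C, restrict j D) = j"
    proof
      fix z show "glue (restrict j C, restrict j D) z = j z"
        using PiE_arb[OF j, of z] by (simp add: glue_def)
    qed
  next
    fix pq assume "pq \<in> {p \<in> C \<rightarrow>\<^sub>E S. P p} \<times> {q \<in> D \<rightarrow>\<^sub>E S. Q q}"
    then obtain p q where pq: "pq = (p, q)" "p \<in> C \<rightarrow>\<^sub>E S" "q \<in> D \<rightarrow>\<^sub>E S" "P p" "Q q"
      by blast
    have "restrict (glue pq) C = p"
    proof
      fix z show "restrict (glue pq) C z = p z"
        using PiE_arb[OF pq(2), of z] by (simp add: glue_def pq(1))
    qed
    moreover have "restrict (glue pq) D = q"
    proof
      fix z show "restrict (glue pq) D z = q z"
        using PiE_arb[OF pq(3), of z] assms by (auto simp: glue_def pq(1))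
    qed
    moreover have "glue pq \<in> C \<union> D \<rightarrow>\<^sub>E S"
      using pq(2,3) PiE_arb[OF pq(3)] by (auto simp: glue_def pq(1) PiE_iff extensional_def)
    ultimately show "(restrict (glue pq) C, restrict (glue pq) D) = pq"
      "glue pq \<in> {j \<in> C \<union> D \<rightarrow>\<^sub>E S. P (restrict j C) \<and> Q (restrict j D)}"
      using pq by simp_all
  qed (auto simp: PiE_iff)
  then show ?thesis by (simp add: sum.cartesian_product)
qed

lemma tree_edge_component:
  assumes T: "is_tree V E" and e: "{v, w} \<in> E"
  shows "v \<in> component (E - {{v, w}}) V v" "w \<in> V - component (E - {{v, w}}) V v"
  using tree_edge_vertices[OF T e] tree_delete_edge_not_reach[OF T e]
  by (simp_all add: component_def)

lemma tree_edge_side: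
  assumes T: "is_tree V E" and e: "{v, w} \<in> E" and f: "f \<in> E - {{v, w}}"
  shows "f \<subseteq> component (E - {{v, w}}) V v \<or> f \<subseteq> V - component (E - {{v, w}}) V v"
proof -
  have "f \<in> E" using f by simp
  then obtain a b where "f = {a, b}" "a \<in> V" "b \<in> V" by (rule tree_edgeE[OF T])
  then show ?thesis
    using edge_within_component[of a b "E - {{v, w}}" V v] f by auto
qed

definition GM_weight ::
    "'v set set \<Rightarrow> 'v \<Rightarrow> (nat \<Rightarrow> 'a) \<Rightarrow> ('v set \<Rightarrow> nat \<Rightarrow> nat \<Rightarrow> 'a) \<Rightarrow> ('v \<Rightarrow> nat) \<Rightarrow> 'a :: comm_monoid_mult"
  where "GM_weight E r \<pi> M j = \<pi> (j r) * (\<Prod>f\<in>E. M f (j (par E r f)) (j (chi E r f)))"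

lemma GM_weight_factors_at_edge:
  fixes \<pi> :: "nat \<Rightarrow> 'a :: comm_monoid_mult" and M :: "'v set \<Rightarrow> nat \<Rightarrow> nat \<Rightarrow> 'a"
  assumes T: "is_tree V E" and e: "{v, w} \<in> E" and r: "r \<in> V"
  defines "C \<equiv> component (E - {{v, w}}) V v"
  obtains G H where
    "\<And>j. GM_weight E r \<pi> M j = G (restrict j C) * H (j v) (restrict j (V - C))"
proof -
  let ?e = "{v, w}"
  define EC where "EC = {f \<in> E - {?e}. f \<subseteq> C}"
  define ED where "ED = {f \<in> E - {?e}. f \<subseteq> V - C}"
  define m where "m j f = M f (j (par E r f)) (j (chi E r f))" for j :: "'v \<Rightarrow> nat" and f
  have vC: "v \<in> C" and wD: "w \<in> V - C"
    using tree_edge_component[OF T e] by (simp_all add: C_def)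
  have E_eq: "E = insert ?e (EC \<union> ED)"
    using e tree_edge_side[OF T e] by (auto simp: EC_def ED_def C_def)
  have "f \<noteq> {}" if fE: "f \<in> E" for f
  proof -
    obtain a b where "f = {a, b}" by (rule tree_edgeE[OF T fE])
    then show ?thesis by simp
  qed
  then have disj: "EC \<inter> ED = {}" by (auto simp: EC_def ED_def)
  have fin: "finite EC" "finite ED"
    using tree_finite_edges[OF T] by (simp_all add: EC_def ED_def)
  have m_EC: "m j f = m (restrict j C) f" if "f \<in> EC" for j f
  proof -
    have "{par E r f, chi E r f} \<subseteq> C"
      using that tree_edge_par_chi(1)[OF T _ r, of f] by (auto simp: EC_def)
    then show ?thesis by (simp add: m_def)
  qed
  have m_ED: "m j f = m (restrict j (V - C)) f" if "f \<in> ED" for j f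
  proof -
    have "{par E r f, chi E r f} \<subseteq> V - C"
      using that tree_edge_par_chi(1)[OF T _ r, of f] by (auto simp: ED_def)
    then show ?thesis by (simp add: m_def)
  qed
  define K where "K s t = (if par E r ?e = v then M ?e s t else M ?e t s)" for s t
  have m_e: "m j ?e = K (j v) (j w)" for j
  proof -
    have "?e = {par E r ?e, chi E r ?e}" "par E r ?e \<noteq> chi E r ?e"
      using tree_edge_par_chi[OF T e r] by simp_all
    then have "par E r ?e = v \<and> chi E r ?e = w \<or> par E r ?e = w \<and> chi E r ?e = v"
      by (metis doubleton_eq_iff)
    moreover have "v \<noteq> w" using vC wD by blast
    ultimately show ?thesis by (auto simp: m_def K_def)
  qed
  define G where "G p = (if r \<in> C then \<pi> (p r) else 1) * (\<Prod>f\<in>EC. m p f)" for p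
  define H where "H s q = K s (q w) * (if r \<in> C then 1 else \<pi> (q r)) * (\<Prod>f\<in>ED. m q f)"
    for s q
  show thesis
  proof (rule that)
    fix j :: "'v \<Rightarrow> nat"
    have "(\<Prod>f\<in>E. m j f) = m j ?e * (\<Prod>f\<in>EC. m j f) * (\<Prod>f\<in>ED. m j f)"
      unfolding E_eq using fin disj by (simp add: prod.union_disjoint EC_def ED_def mult.assoc)
    also have "(\<Prod>f\<in>EC. m j f) = (\<Prod>f\<in>EC. m (restrict j C) f)"
      by (rule prod.cong[OF refl]) (rule m_EC)
    also have "(\<Prod>f\<in>ED. m j f) = (\<Prod>f\<in>ED. m (restrict j (V - C)) f)"
      by (rule prod.cong[OF refl]) (rule m_ED)
    also have "m j ?e = K (j v) (restrict j (V - C) w)"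
      using m_e wD by simp
    finally have "(\<Prod>f\<in>E. M f (j (par E r f)) (j (chi E r f)))
        = K (j v) (restrict j (V - C) w)
          * (\<Prod>f\<in>EC. m (restrict j C) f) * (\<Prod>f\<in>ED. m (restrict j (V - C)) f)"
      by (simp add: m_def)
    then show "GM_weight E r \<pi> M j = G (restrict j C) * H (j v) (restrict j (V - C))"
      using r by (cases "r \<in> C") (simp_all add: GM_weight_def G_def H_def ac_simps)
  qed
qed

lemma GM_sum_factors_at_edge:
  fixes \<pi> :: "nat \<Rightarrow> 'a :: comm_semiring_1" and M :: "'v set \<Rightarrow> nat \<Rightarrow> nat \<Rightarrow> 'a"
  assumes T: "is_tree V E" and e: "{v, w} \<in> E" and r: "r \<in> V" and lab: "lab ` {..<n} \<subseteq> V"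
  obtains L R where
    "\<And>a b. (\<Sum>j\<in>{j \<in> V \<rightarrow>\<^sub>E {..<\<kappa>}. \<forall>k<n. j (lab k) = (if k \<in> side E lab n {v, w} v then a k else b k)}.
        GM_weight E r \<pi> M j) = (\<Sum>s<\<kappa>. L a s * R s b)"
proof -
  let ?A = "side E lab n {v, w} v"
  define C where "C = component (E - {{v, w}}) V v"
  let ?D = "V - C"
  obtain G H where GH: "\<And>j. GM_weight E r \<pi> M j = G (restrict j C) * H (j v) (restrict j ?D)"
    using GM_weight_factors_at_edge[OF T e r, of \<pi> M] unfolding C_def by blast
  have vC: "v \<in> C" using tree_edge_component[OF T e] by (simp add: C_def)
  have CV: "C \<subseteq> V" by (auto simp: C_def component_def)
  have finC: "finite C" "finite ?D"
    using CV tree_finite_vertices[OF T] finite_subset by auto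
  have side: "k \<in> ?A \<longleftrightarrow> lab k \<in> C" if "k < n" for k
    using that lab by (auto simp: side_def C_def component_def)
  define PC :: "(nat \<Rightarrow> nat) \<Rightarrow> ('v \<Rightarrow> nat) \<Rightarrow> bool"
    where "PC a p \<longleftrightarrow> (\<forall>k<n. k \<in> ?A \<longrightarrow> p (lab k) = a k)" for a p
  define QD :: "(nat \<Rightarrow> nat) \<Rightarrow> ('v \<Rightarrow> nat) \<Rightarrow> bool"
    where "QD b q \<longleftrightarrow> (\<forall>k<n. k \<notin> ?A \<longrightarrow> q (lab k) = b k)" for b q
  have leaves: "(\<forall>k<n. j (lab k) = (if k \<in> ?A then a k else b k))
      \<longleftrightarrow> PC a (restrict j C) \<and> QD b (restrict j ?D)" for j :: "'v \<Rightarrow> nat" and a b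
    using side lab by (auto simp: PC_def QD_def)
  define L where "L a s = (\<Sum>p\<in>{p \<in> C \<rightarrow>\<^sub>E {..<\<kappa>}. PC a p \<and> p v = s}. G p)" for a s
  define R where "R s b = (\<Sum>q\<in>{q \<in> ?D \<rightarrow>\<^sub>E {..<\<kappa>}. QD b q}. H s q)" for s b
  show thesis
  proof (rule that)
    fix a b
    have "V = C \<union> ?D" using CV by blast
    then have "(\<Sum>j\<in>{j \<in> V \<rightarrow>\<^sub>E {..<\<kappa>}. \<forall>k<n. j (lab k) = (if k \<in> ?A then a k else b k)}.
          GM_weight E r \<pi> M j)
        = (\<Sum>j\<in>{j \<in> C \<union> ?D \<rightarrow>\<^sub>E {..<\<kappa>}. PC a (restrict j C) \<and> QD b (restrict j ?D)}.
          G (restrict j C) * H (restrict j C v) (restrict j ?D))"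
      using vC by (simp add: leaves GH)
    also have "\<dots> = (\<Sum>p\<in>{p \<in> C \<rightarrow>\<^sub>E {..<\<kappa>}. PC a p}. \<Sum>q\<in>{q \<in> ?D \<rightarrow>\<^sub>E {..<\<kappa>}. QD b q}.
          G p * H (p v) q)"
      by (rule sum_PiE_Un_restrict) blast
    also have "\<dots> = (\<Sum>p\<in>{p \<in> C \<rightarrow>\<^sub>E {..<\<kappa>}. PC a p}. G p * R (p v) b)"
      by (simp add: R_def sum_distrib_left)
    also have "\<dots> = (\<Sum>s<\<kappa>. \<Sum>p\<in>{p \<in> {p \<in> C \<rightarrow>\<^sub>E {..<\<kappa>}. PC a p}. p v = s}. G p * R (p v) b)"
      using finC vC by (intro sum.group[symmetric]) (auto simp: finite_PiE)
    also have "\<dots> = (\<Sum>s<\<kappa>. L a s * R s b)"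
      by (simp add: L_def sum_distrib_right conj_assoc)
    finally show "(\<Sum>j\<in>{j \<in> V \<rightarrow>\<^sub>E {..<\<kappa>}. \<forall>k<n. j (lab k) = (if k \<in> ?A then a k else b k)}.
        GM_weight E r \<pi> M j) = (\<Sum>s<\<kappa>. L a s * R s b)" .
  qed
qed

lemma length_flat_idx [simp]: "length (flat_idx n A a b) = n"
  by (simp add: flat_idx_def)

lemma nth_flat_idx [simp]: "k < n \<Longrightarrow> flat_idx n A a b ! k = (if k \<in> A then a k else b k)"
  by (simp add: flat_idx_def)

lemma GMI_dist_flat_idx_factors:
  fixes V :: "'v set"
  assumes T: "is_tree V E" and lab: "lab ` {..<n} \<subseteq> V" and e: "e \<in> E" "v \<in> e" and r: "r \<in> V"
  obtains L R where
    "\<And>a b. (\<And>s. flat_idx n (side E lab n e v) a b \<noteq> replicate n s) \<Longrightarrow>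
       GMI_dist V E lab n \<kappa> r \<delta> \<pi>I \<pi>G M (flat_idx n (side E lab n e v) a b) = (\<Sum>s<\<kappa>. L a s * R s b)"
proof -
  obtain a b where "e = {a, b}" by (rule tree_edgeE[OF T e(1)])
  then have "e = {v, if v = a then b else a}" using e(2) by (auto simp: insert_commute)
  then obtain w where ew: "e = {v, w}" by blast
  obtain L R where LR: "\<And>a b. (\<Sum>j\<in>{j \<in> V \<rightarrow>\<^sub>E {..<\<kappa>}.
      \<forall>k<n. j (lab k) = (if k \<in> side E lab n e v then a k else b k)}.
        GM_weight E r \<pi>G M j) = (\<Sum>s<\<kappa>. L a s * R s b)"
    by (rule GM_sum_factors_at_edge[OF T e(1)[unfolded ew] r lab, where \<pi> = \<pi>G and M = M and \<kappa> = \<kappa>,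
          folded ew]) (erule that)
  show thesis
  proof (rule that[of "\<lambda>a s. (1 - \<delta>) * L a s" R])
    fix a b
    let ?i = "flat_idx n (side E lab n e v) a b"
    assume non_constant: "\<And>s. ?i \<noteq> replicate n s"
    have not_const: "\<not> (\<forall>k<n. ?i ! k = ?i ! 0)"
    proof
      assume "\<forall>k<n. ?i ! k = ?i ! 0"
      then have "\<forall>y\<in>set ?i. y = ?i ! 0" unfolding all_set_conv_all_nth length_flat_idx .
      from replicate_length_same[OF this] have "replicate n (?i ! 0) = ?i"
        by (simp only: length_flat_idx)
      then show False using non_constant[of "?i ! 0"] by argo
    qed
    have "GMI_dist V E lab n \<kappa> r \<delta> \<pi>I \<pi>G M ?i = (1 - \<delta>) *
        (\<Sum>j\<in>{j \<in> V \<rightarrow>\<^sub>E {..<\<kappa>}. \<forall>k<n. j (lab k) = ?i ! k}. GM_weight E r \<pi>G M j)"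
      unfolding GMI_dist_def GM_weight_def if_not_P[OF not_const] by simp
    also have "{j \<in> V \<rightarrow>\<^sub>E {..<\<kappa>}. \<forall>k<n. j (lab k) = ?i ! k}
        = {j \<in> V \<rightarrow>\<^sub>E {..<\<kappa>}. \<forall>k<n. j (lab k) = (if k \<in> side E lab n e v then a k else b k)}"
      by simp
    finally show "GMI_dist V E lab n \<kappa> r \<delta> \<pi>I \<pi>G M ?i = (\<Sum>s<\<kappa>. (1 - \<delta>) * L a s * R s b)"
      by (simp add: LR sum_distrib_left mult.assoc)
  qed
qed

lemma flat_minor_GMI_dist_eq_0:
  assumes "is_tree V E" "lab ` {..<n} \<subseteq> V" "e \<in> E" "v \<in> e" "r \<in> V"
    and rs: "length rs = Suc \<kappa>" and cs: "length cs = Suc \<kappa>"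
    and non_constant: "\<forall>x<Suc \<kappa>. \<forall>y<Suc \<kappa>. \<forall>s.
      flat_idx n (side E lab n e v) (rs ! x) (cs ! y) \<noteq> replicate n s"
  shows "flat_minor n (side E lab n e v) rs cs (GMI_dist V E lab n \<kappa> r \<delta> \<pi>I \<pi>G M) = 0"
proof -
  obtain L R where LR: "\<And>a b. (\<And>s. flat_idx n (side E lab n e v) a b \<noteq> replicate n s) \<Longrightarrow>
      GMI_dist V E lab n \<kappa> r \<delta> \<pi>I \<pi>G M (flat_idx n (side E lab n e v) a b) = (\<Sum>s<\<kappa>. L a s * R s b)"
    by (rule GMI_dist_flat_idx_factors[OF assms(1-5), where \<kappa> = \<kappa> and \<delta> = \<delta> and \<pi>I = \<pi>I
          and \<pi>G = \<pi>G and M = M]) (erule that)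
  have "flat_minor n (side E lab n e v) rs cs (GMI_dist V E lab n \<kappa> r \<delta> \<pi>I \<pi>G M)
      = det (mat (Suc \<kappa>) (Suc \<kappa>) (\<lambda>(x, y). \<Sum>s<\<kappa>. L (rs ! x) s * R s (cs ! y)))"
    unfolding flat_minor_def rs cs
  proof (intro arg_cong[where f = det] eq_matI)
    fix x y assume "x < dim_row (mat (Suc \<kappa>) (Suc \<kappa>) (\<lambda>(x, y). \<Sum>s<\<kappa>. L (rs ! x) s * R s (cs ! y)))"
      and "y < dim_col (mat (Suc \<kappa>) (Suc \<kappa>) (\<lambda>(x, y). \<Sum>s<\<kappa>. L (rs ! x) s * R s (cs ! y)))"
    then have "x < Suc \<kappa>" "y < Suc \<kappa>" by simp_all
    then show "mat (Suc \<kappa>) (Suc \<kappa>) (\<lambda>(x, y). GMI_dist V E lab n \<kappa> r \<delta> \<pi>I \<pi>G M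
          (flat_idx n (side E lab n e v) (rs ! x) (cs ! y))) $$ (x, y)
        = mat (Suc \<kappa>) (Suc \<kappa>) (\<lambda>(x, y). \<Sum>s<\<kappa>. L (rs ! x) s * R s (cs ! y)) $$ (x, y)"
      using LR non_constant by simp
  qed simp_all
  also have "\<dots> = 0" by (rule det_mat_sum_of_products_eq_0)
  finally show ?thesis .
qed

lemma phylo_invariant_flat_minor:
  assumes T: "taxon_tree V E lab n" and "e \<in> E" "v \<in> e"
    and "length rs = Suc \<kappa>" "length cs = Suc \<kappa>"
    and "\<forall>x<Suc \<kappa>. \<forall>y<Suc \<kappa>. \<forall>s. flat_idx n (side E lab n e v) (rs ! x) (cs ! y) \<noteq> replicate n s"
  shows "phylo_invariant V E lab n \<kappa> (flat_minor n (side E lab n e v) rs cs)"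
proof -
  have tree: "is_tree V E" and "lab ` {..<n} = {u \<in> V. deg E u = 1}"
    using T unfolding taxon_tree_def bij_betw_def by blast+
  then have "lab ` {..<n} \<subseteq> V" by blast
  then show ?thesis
    unfolding phylo_invariant_def
    using flat_minor_GMI_dist_eq_0[OF tree _ assms(2,3) _ assms(4-6)] by blast
qed

lemma det_3x3_eq_flat_minor:
  "(\<lambda>P. det (mat_of_rows_list 3
      [[P [a1, b1, c1, d1], P [a1, b1, c2, d2], P [a1, b1, c3, d3]],
       [P [a2, b2, c1, d1], P [a2, b2, c2, d2], P [a2, b2, c3, d3]],
       [P [a3, b3, c1, d1], P [a3, b3, c2, d2], P [a3, b3, c3, d3]]]))
   = flat_minor 4 {0, 1} [nth [a1, b1], nth [a2, b2], nth [a3, b3]]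
       [\<lambda>k. [c1, d1] ! (k - 2), \<lambda>k. [c2, d2] ! (k - 2), \<lambda>k. [c3, d3] ! (k - 2)]"
proof
  fix P :: "nat list \<Rightarrow> real"
  show "det (mat_of_rows_list 3
      [[P [a1, b1, c1, d1], P [a1, b1, c2, d2], P [a1, b1, c3, d3]],
       [P [a2, b2, c1, d1], P [a2, b2, c2, d2], P [a2, b2, c3, d3]],
       [P [a3, b3, c1, d1], P [a3, b3, c2, d2], P [a3, b3, c3, d3]]])
    = flat_minor 4 {0, 1} [nth [a1, b1], nth [a2, b2], nth [a3, b3]]
       [\<lambda>k. [c1, d1] ! (k - 2), \<lambda>k. [c2, d2] ! (k - 2), \<lambda>k. [c3, d3] ! (k - 2)] P"
    unfolding flat_minor_def mat_of_rows_list_def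
    by (intro arg_cong[where f = det] eq_matI)
      (auto simp: flat_idx_def upt_rec less_Suc_eq eval_nat_numeral)
qed

lemma phylo_invariant_four_taxon_minor:
  assumes "binary_taxon_tree V E lab 4" "\<exists>e\<in>E. \<exists>v\<in>e. side E lab 4 e v = {0, 1}"
    and "length rs = 3" "length cs = 3"
    and "\<forall>x<3. \<forall>y<3. \<forall>s. flat_idx 4 {0, 1} (rs ! x) (cs ! y) \<noteq> replicate 4 s"
  shows "phylo_invariant V E lab 4 2 (flat_minor 4 {0, 1} rs cs)"
proof -
  obtain e v where "e \<in> E" "v \<in> e" and side: "side E lab 4 e v = {0, 1}"
    using assms(2) by blast
  moreover have "taxon_tree V E lab 4" using assms(1) by (simp add: binary_taxon_tree_def)
  ultimately show ?thesis
    using phylo_invariant_flat_minor[of V E lab 4 e v rs 2 cs] assms(3-5) by (simp add: side)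
qed

theorem proposition5:
  shows
  "(\<forall>(V :: 'v set) E lab.
      binary_taxon_tree V E lab 4 \<and> (\<exists>e\<in>E. \<exists>v\<in>e. side E lab 4 e v = {0, 1}) \<longrightarrow>
        phylo_invariant V E lab 4 2 (\<lambda>P. det (mat_of_rows_list 3
           [[P [0,0,0,1], P [0,0,1,0], P [0,0,1,1]],
            [P [0,1,0,1], P [0,1,1,0], P [0,1,1,1]],
            [P [1,0,0,1], P [1,0,1,0], P [1,0,1,1]]]))
      \<and> phylo_invariant V E lab 4 2 (\<lambda>P. det (mat_of_rows_list 3
           [[P [0,1,0,0], P [0,1,0,1], P [0,1,1,0]],
            [P [1,0,0,0], P [1,0,0,1], P [1,0,1,0]],
            [P [1,1,0,0], P [1,1,0,1], P [1,1,1,0]]])))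
   \<and>
   (\<forall>(V :: 'w set) E lab n \<kappa> e v rs cs.
      n \<ge> 4 \<and> \<kappa> \<ge> 2 \<and> taxon_tree V E lab n \<and> e \<in> E \<and> v \<in> e
      \<and> length rs = \<kappa> + 1 \<and> distinct rs
      \<and> set rs \<subseteq> side E lab n e v \<rightarrow>\<^sub>E {..<\<kappa>}
      \<and> length cs = \<kappa> + 1 \<and> distinct cs
      \<and> set cs \<subseteq> ({..<n} - side E lab n e v) \<rightarrow>\<^sub>E {..<\<kappa>}
      \<and> (\<forall>x<\<kappa>+1. \<forall>y<\<kappa>+1. \<forall>s.
            flat_idx n (side E lab n e v) (rs ! x) (cs ! y) \<noteq> replicate n s)
      \<longrightarrow> phylo_invariant V E lab n \<kappa> (flat_minor n (side E lab n e v) rs cs))"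
  unfolding det_3x3_eq_flat_minor
proof (intro conjI allI impI; elim conjE)
  fix V :: "'v set" and E lab
  assume "binary_taxon_tree V E lab 4" "\<exists>e\<in>E. \<exists>v\<in>e. side E lab 4 e v = {0, 1}"
  note four_taxon_minor = phylo_invariant_four_taxon_minor[OF this]
  show "phylo_invariant V E lab 4 2 (flat_minor 4 {0, 1} [nth [0, 0], nth [0, 1], nth [1, 0]]
      [\<lambda>k. [0, 1] ! (k - 2), \<lambda>k. [1, 0] ! (k - 2), \<lambda>k. [1, 1] ! (k - 2)])"
    by (rule four_taxon_minor) (simp_all add: flat_idx_def All_less_Suc eval_nat_numeral)
  show "phylo_invariant V E lab 4 2 (flat_minor 4 {0, 1} [nth [0, 1], nth [1, 0], nth [1, 1]]
      [\<lambda>k. [0, 0] ! (k - 2), \<lambda>k. [0, 1] ! (k - 2), \<lambda>k. [1, 0] ! (k - 2)])"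
    by (rule four_taxon_minor) (simp_all add: flat_idx_def All_less_Suc eval_nat_numeral)
qed (intro phylo_invariant_flat_minor, simp_all)

end
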